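(* Let $w,v\in\Sigma^+$ be primitive words. The following are equivalent: (1) $w$ and $v$ are co-primitive; (2) there exist $n_0,m_0\in\mathbb{N}$ such that $\mathsf{Facs}(w^{n_0})\cap\mathsf{Facs}(v^{m_0})=\mathsf{Facs}(w^{n})\cap\mathsf{Facs}(v^{m})$ for all $n>n_0$ and all $m>m_0$; (3) there exists $r\in\mathbb{N}$ such that $r\ge\max\{|x| : x\in\mathsf{Facs}(w^n)\cap\mathsf{Facs}(v^m)\}$ for all $n,m\in\mathbb{N}$.
   Context: $\mathsf{Facs}(w)$ is the set of all factors of $w$. A word $w\in\Sigma^+$ is primitive if there is no $z\in\Sigma^*$ and $k>1$ with $w=z^k$. Two words $w,v\in\Sigma^+$ are conjugate if there exist $x,y\in\Sigma^*$ with $w=xy$ and $v=yx$. Two words are co-primitive if both are primitive and they are not conjugate. *)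

theory Defs
  imports Main "HOL-Library.Sublist"
begin

definition pow :: "'a list \<Rightarrow> nat \<Rightarrow> 'a list" where
  "pow w n = concat (replicate n w)"

definition Facs :: "'a list \<Rightarrow> 'a list set" where
  "Facs w = {x. sublist x w}"

definition primitive :: "'a list \<Rightarrow> bool" where
  "primitive w \<longleftrightarrow> w \<noteq> [] \<and> \<not> (\<exists>z k. k > 1 \<and> w = pow z k)"

definition conjugate :: "'a list \<Rightarrow> 'a list \<Rightarrow> bool" where
  "conjugate w v \<longleftrightarrow> w \<noteq> [] \<and> v \<noteq> [] \<and> (\<exists>x y. w = x @ y \<and> v = y @ x)"

definition coprimitive :: "'a list \<Rightarrow> 'a list \<Rightarrow> bool" where
  "coprimitive w v \<longleftrightarrow> primitive w \<and> primitive v \<and> \<not> conjugate w v"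

end

theory Submission imports Defs begin

text \<open>A common factor x of powers of w and of v reads both w and v cyclically. If
  |x| \<ge> |w| + |v|, its prefix of that length equals both p q and q p, where p and q are
  rotations of w and v; commuting words are powers of a common word, and since rotations of
  primitive words are primitive, p = q, so w and v are conjugate. Hence co-primitive words
  have common factors of length < |w| + |v| only, all of which already occur in small powers.
  Conversely, conjugate words share the factors v^m of w^(m+1), which are arbitrarily long.\<close>

lemma pow_0 [simp]: "pow w 0 = []"
  by (simp add: pow_def)

lemma pow_Suc [simp]: "pow w (Suc n) = w @ pow w n"
  by (simp add: pow_def)

lemma length_pow [simp]: "length (pow w n) = n * length w"
  by (induct n) auto

lemma nth_pow: "i < n * length w \<Longrightarrow> pow w n ! i = w ! (i mod length w)"
proof (induct n arbitrary: i)
  case (Suc n)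
  then show ?case
    by (cases "i < length w") (auto simp: nth_append le_mod_geq)
qed simp

lemma pow_append_Suc: "pow (x @ y) (Suc m) = x @ pow (y @ x) m @ y"
  by (induct m) auto

lemma rotate_pow: "rotate k (pow w n) = pow (rotate k w) n"
proof (rule nth_equalityI)
  fix i assume "i < length (rotate k (pow w n))"
  then have i: "i < n * length w" by simp
  then have "0 < n * length w" by linarith
  then have "w \<noteq> []" and "(k + i) mod (n * length w) < n * length w"
    by auto
  with i have "rotate k (pow w n) ! i = w ! ((k + i) mod (n * length w) mod length w)"
    by (simp add: nth_rotate nth_pow)
  also have "\<dots> = rotate k w ! (i mod length w)"
    using \<open>w \<noteq> []\<close> by (simp add: nth_rotate mod_mod_cancel mod_add_right_eq)
  finally show "rotate k (pow w n) ! i = pow (rotate k w) n ! i"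
    using i by (simp add: nth_pow)
qed simp

lemma rotate_inverse: "rotate (length w - k mod length w) (rotate k w) = w"
proof (cases "w = []")
  case False
  then have "length (drop (k mod length w) w) = length w - k mod length w" by simp
  then show ?thesis
    by (metis rotate_drop_take rotate_append append_take_drop_id)
qed simp

lemma conjugate_rotate: "w \<noteq> [] \<Longrightarrow> conjugate w (rotate k w)"
  unfolding conjugate_def
  by (metis append_take_drop_id rotate_drop_take length_rotate length_0_conv)

lemma conjugate_sublist_pow: "conjugate w v \<Longrightarrow> sublist (pow v m) (pow w (Suc m))"
  unfolding conjugate_def by (metis pow_append_Suc sublist_appendI)

lemma primitive_pow_eq_1: "primitive (pow z a) \<Longrightarrow> a = 1"
  unfolding primitive_def by (metis pow_0 less_one linorder_neqE_nat)

lemma primitive_rotate: "primitive w \<Longrightarrow> primitive (rotate k w)"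
  unfolding primitive_def
  by (metis rotate_inverse rotate_pow length_rotate length_0_conv)

lemma primitive_comm_eq:
  assumes "primitive p" and "primitive q" and "p @ q = q @ p"
  shows "p = q"
proof -
  obtain a b z where "pow z a = p" and "pow z b = q"
    using comm_append_are_replicate[OF assms(3)] unfolding pow_def by metis
  with assms(1,2) show ?thesis
    using primitive_pow_eq_1 by blast
qed

definition cyclic_at :: "'a list \<Rightarrow> nat \<Rightarrow> 'a list \<Rightarrow> bool" where
  "cyclic_at w k x \<longleftrightarrow> (\<forall>i < length x. x ! i = w ! ((k + i) mod length w))"

lemma sublist_pow_cyclic_at:
  assumes "sublist x (pow w n)"
  shows "\<exists>k. cyclic_at w k x"
proof -
  obtain a b where ab: "pow w n = a @ x @ b"
    using assms by (auto simp: sublist_def)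
  have "cyclic_at w (length a) x"
    unfolding cyclic_at_def
  proof (intro allI impI)
    fix i assume i: "i < length x"
    then have "length a + i < n * length w"
      using arg_cong[OF ab, of length] by simp
    then show "x ! i = w ! ((length a + i) mod length w)"
      using ab i by (metis nth_pow nth_append_length_plus nth_append)
  qed
  then show ?thesis ..
qed

lemma cyclic_at_sublist_pow:
  assumes "cyclic_at w k x" and "k < length w" and "length x + length w \<le> N * length w"
  shows "sublist x (pow w N)"
proof -
  have "x = take (length x) (drop k (pow w N))"
  proof (rule nth_equalityI)
    fix i assume "i < length x"
    moreover have "k + i < N * length w"
      using \<open>i < length x\<close> assms(2,3) by linarith
    ultimately show "x ! i = take (length x) (drop k (pow w N)) ! i"
      using assms(1) by (simp add: cyclic_at_def nth_pow)
  qed (use assms(2,3) in simp)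
  then show ?thesis
    by (metis append_take_drop_id sublist_appendI)
qed

lemma sublist_pow_change_exponent:
  assumes "w \<noteq> []" and "sublist x (pow w n)" and "length x + length w \<le> N * length w"
  shows "sublist x (pow w N)"
proof -
  obtain k where "cyclic_at w k x"
    using sublist_pow_cyclic_at[OF assms(2)] ..
  then have "cyclic_at w (k mod length w) x"
    by (simp add: cyclic_at_def mod_add_left_eq)
  with assms(1,3) show ?thesis
    by (intro cyclic_at_sublist_pow) auto
qed

lemma cyclic_at_append_rotate:
  assumes w: "cyclic_at w k x" and v: "cyclic_at v l x" and len: "length w + length v \<le> length x"
  shows "rotate k w @ rotate l v = take (length w + length v) x"
proof (rule nth_equalityI)
  fix i assume "i < length (rotate k w @ rotate l v)"
  then have i: "i < length w + length v" by simp
  show "(rotate k w @ rotate l v) ! i = take (length w + length v) x ! i"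
  proof (cases "i < length w")
    case True
    then show ?thesis
      using w i len by (simp add: cyclic_at_def nth_append nth_rotate)
  next
    case False
    then have "(k + (i - length w)) mod length w = (k + i) mod length w"
      by (metis add_diff_inverse_nat mod_add_self2 add.assoc add.commute)
    then have "x ! (i - length w) = x ! i"
      using w i len by (simp add: cyclic_at_def)
    then show ?thesis
      using v i len False by (simp add: cyclic_at_def nth_append nth_rotate)
  qed
qed (use len in simp)

lemma common_factor_conjugate:
  assumes "primitive w" and "primitive v"
    and "sublist x (pow w n)" and "sublist x (pow v m)" and "length w + length v \<le> length x"
  shows "conjugate w v"
proof -
  obtain k l where "cyclic_at w k x" and "cyclic_at v l x"
    using sublist_pow_cyclic_at assms(3,4) by metis
  then have "rotate k w @ rotate l v = rotate l v @ rotate k w"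
    using cyclic_at_append_rotate assms(5) by (metis add.commute)
  then have "rotate l v = rotate k w"
    using primitive_comm_eq primitive_rotate assms(1,2) by metis
  then have "v = rotate (length v - l mod length v + k) w"
    by (metis rotate_inverse rotate_rotate)
  moreover have "w \<noteq> []"
    using assms(1) by (simp add: primitive_def)
  ultimately show ?thesis
    using conjugate_rotate by metis
qed

lemma coprimitive_common_factor_short:
  assumes "coprimitive w v" and "sublist x (pow w n)" and "sublist x (pow v m)"
  shows "length x < length w + length v"
  using assms common_factor_conjugate[of w v x n m] by (force simp: coprimitive_def)

lemma coprimitive_Facs_inter_subset:
  assumes "coprimitive w v" and "length v + 2 \<le> n'" and "length w + 2 \<le> m'"
  shows "Facs (pow w n) \<inter> Facs (pow v m) \<subseteq> Facs (pow w n') \<inter> Facs (pow v m')"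
proof
  have "w \<noteq> []" and "v \<noteq> []"
    using assms(1) by (auto simp: coprimitive_def primitive_def)
  have enough: "length x + length u \<le> N * length u"
    if "u \<noteq> []" and "length x < length u + d" and "d + 2 \<le> N" for x u :: "'a list" and d N
  proof -
    have "d \<le> d * length u"
      using that(1) by (cases u) auto
    then have "length x + length u \<le> (d + 2) * length u"
      using that(2) unfolding distrib_right by linarith
    also have "\<dots> \<le> N * length u"
      using that(3) by (rule mult_le_mono1)
    finally show ?thesis .
  qed
  fix x assume "x \<in> Facs (pow w n) \<inter> Facs (pow v m)"
  then have x: "sublist x (pow w n)" "sublist x (pow v m)"
    by (auto simp: Facs_def)
  then have "length x < length w + length v"
    using coprimitive_common_factor_short assms(1) by blast
  then have "sublist x (pow w n')" and "sublist x (pow v m')"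
    using sublist_pow_change_exponent enough x \<open>w \<noteq> []\<close> \<open>v \<noteq> []\<close> assms(2,3)
    by (metis add.commute)+
  then show "x \<in> Facs (pow w n') \<inter> Facs (pow v m')"
    by (simp add: Facs_def)
qed

lemma conjugate_pow_in_Facs_inter:
  "conjugate w v \<Longrightarrow> pow v m \<in> Facs (pow w (Suc m)) \<inter> Facs (pow v m)"
  by (auto simp: Facs_def simp del: pow_Suc intro: conjugate_sublist_pow)

lemma length_le_if_in_Facs: "x \<in> Facs y \<Longrightarrow> length x \<le> length y"
  by (simp add: Facs_def sublist_length_le)

lemma conjugate_Facs_inter_not_stable:
  assumes "conjugate w v"
  shows "\<exists>n > n0. \<exists>m > m0. Facs (pow w n0) \<inter> Facs (pow v m0) \<noteq> Facs (pow w n) \<inter> Facs (pow v m)"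
proof -
  define m where "m = Suc (m0 + n0 * length w)"
  have "w \<noteq> []" and "v \<noteq> []"
    using assms by (auto simp: conjugate_def)
  have "n0 \<le> n0 * length w" and "m \<le> m * length v"
    using \<open>w \<noteq> []\<close> \<open>v \<noteq> []\<close> by (simp_all add: Suc_le_eq)
  then have "n0 * length w < m * length v" and "n0 < Suc m"
    unfolding m_def by linarith+
  then have "pow v m \<notin> Facs (pow w n0) \<inter> Facs (pow v m0)"
    using length_le_if_in_Facs by fastforce
  moreover have "m0 < m"
    by (simp add: m_def)
  ultimately show ?thesis
    using conjugate_pow_in_Facs_inter[OF assms] \<open>n0 < Suc m\<close> by blast
qed

lemma conjugate_common_factors_unbounded:
  assumes "conjugate w v"
  shows "\<exists>n m. \<exists>x \<in> Facs (pow w n) \<inter> Facs (pow v m). r < length x"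
proof -
  have "r < Suc r * length v"
    using assms by (cases v) (auto simp: conjugate_def)
  then show ?thesis
    using conjugate_pow_in_Facs_inter[OF assms, of "Suc r"] length_pow by metis
qed

theorem lemma4p11:
  fixes w v :: "'a list"
  assumes "primitive w" and "primitive v"
  shows "(coprimitive w v \<longleftrightarrow>
            (\<exists>n0 m0 :: nat. \<forall>n m. n > n0 \<longrightarrow> m > m0 \<longrightarrow>
               Facs (pow w n0) \<inter> Facs (pow v m0) = Facs (pow w n) \<inter> Facs (pow v m)))
       \<and> (coprimitive w v \<longleftrightarrow>
            (\<exists>r :: nat. \<forall>n m :: nat. \<forall>x \<in> Facs (pow w n) \<inter> Facs (pow v m). length x \<le> r))"
proof -
  have coprimitive_iff: "coprimitive w v \<longleftrightarrow> \<not> conjugate w v"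
    using assms by (simp add: coprimitive_def)
  have "\<forall>n m. n > length v + 2 \<longrightarrow> m > length w + 2 \<longrightarrow>
      Facs (pow w (length v + 2)) \<inter> Facs (pow v (length w + 2)) = Facs (pow w n) \<inter> Facs (pow v m)"
    if "coprimitive w v"
    by (intro allI impI subset_antisym coprimitive_Facs_inter_subset[OF that]) auto
  moreover have "\<forall>n m. \<forall>x \<in> Facs (pow w n) \<inter> Facs (pow v m). length x \<le> length w + length v"
    if "coprimitive w v"
    using coprimitive_common_factor_short[OF that] by (fastforce simp: Facs_def)
  ultimately show ?thesis
    using coprimitive_iff conjugate_Facs_inter_not_stable conjugate_common_factors_unbounded
    by (meson leD)
qed

end
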